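(* Let $n\ge 0$ and $\alpha\ge 1$ be integers, $N=2^{n+1}$, $c=2^{\alpha}+1$, and consider the 1D-Tree and the $c$-DAG over the uniform dataset $\{0,\dots,N-1\}$ (as described in the context). For query length $s=1$, $\mathbb{E}_{\mathcal{I}_1}[\mathrm{level}_{c\text{-DAG}}(Q)-\mathrm{level}_{\mathrm{Tree}}(Q)]=0$. For every real $s$ with $1<s\le N$, \[ \mathbb{E}_{\mathcal{I}_s}\bigl[\mathrm{level}_{c\text{-DAG}}(Q)-\mathrm{level}_{\mathrm{Tree}}(Q)\bigr]<2\cdot\frac{c-2}{c-1}. \]
   Context: The 1D-Tree over $\mathcal{D}=\{0,\dots,N-1\}\subset[0,N)$ has levels $\ell=0,\dots,n+1$; its level-$\ell$ nodes are the intervals $[m2^{n-\ell+1},(m+1)2^{n-\ell+1})$, $m=0,\dots,2^\ell-1$. The $c$-DAG over $\mathcal{D}$ has levels $\ell=0,\dots,n+1$; with $u_\ell=2^{n-\ell+1}/(c-1)$, its level-$\ell$ nodes are the intervals $[mu_\ell,\,mu_\ell+2^{n-\ell+1})$, $m=0,1,\dots,(c-1)2^\ell-(c-1)$ (a node $[a,a+L)$ has children $[a+jL/(2(c-1)),\,a+jL/(2(c-1))+L/2)$, $j=0,\dots,c-1$). SRC-search returns a node of the deepest level whose interval contains the query $Q$; $\mathrm{level}_{\mathrm{Tree}}(Q)$ (resp. $\mathrm{level}_{c\text{-DAG}}(Q)$) is the largest $\ell$ such that some level-$\ell$ node of the respective structure contains $Q$. For query length $s$, $\mathcal{I}_s$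 is the distribution of $Q=[x,x+s)$ with $x$ uniform on $[0,N-s]$ (for $s=N$, $x=0$); for $s=1$ queries are single data points, i.e. $x$ uniform on the integers $\{0,\dots,N-1\}$. *)

theory Defs
  imports "HOL-Analysis.Analysis"
begin

definition tree_nodes :: "nat \<Rightarrow> nat \<Rightarrow> real set set" where
  "tree_nodes n l = (\<lambda>m. {real m * 2^(n+1-l) ..< (real m + 1) * 2^(n+1-l)}) ` {..<2^l}"

definition dag_nodes :: "nat \<Rightarrow> nat \<Rightarrow> nat \<Rightarrow> real set set" where
  "dag_nodes c n l = (\<lambda>m. {real m * (2^(n+1-l) / (real c - 1)) ..<
                            real m * (2^(n+1-l) / (real c - 1)) + 2^(n+1-l)})
                     ` {0..(c-1)*2^l - (c-1)}"

definition level_tree :: "nat \<Rightarrow> real set \<Rightarrow> nat" where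
  "level_tree n Q = (GREATEST l. l \<le> n+1 \<and> (\<exists>I\<in>tree_nodes n l. Q \<subseteq> I))"

definition level_dag :: "nat \<Rightarrow> nat \<Rightarrow> real set \<Rightarrow> nat" where
  "level_dag c n Q = (GREATEST l. l \<le> n+1 \<and> (\<exists>I\<in>dag_nodes c n l. Q \<subseteq> I))"

definition level_diff :: "nat \<Rightarrow> nat \<Rightarrow> real \<Rightarrow> real \<Rightarrow> real" where
  "level_diff c n s x = real (level_dag c n {x..<x+s}) - real (level_tree n {x..<x+s})"

end

theory Submission
  imports Defs
begin

(*
  Let k be the deepest level whose nodes, of length L = 2^(n+1-k), are at least as long as the
  query [x, x+s).  At every level both structures consist of intervals [m u, m u + L), m = 0..M,
  and the query lies in one of them iff x \<in> [m u, m u + L - s] for some m; for x \<in> [0, N - s]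
  the bad starting points are therefore M open gaps of length max 0 (u - (L - s)).
  The tree has u = L: at each level l = 1..k its 2^l - 1 gaps of length s are the starting points
  at which the query straddles a node boundary, and the tree level is k minus the number of
  levels at which this happens.  The c-DAG has u = L/(c-1), which at every level l < k is at most
  L - s, so it always reaches level k-1 and misses level k only on (c-1)(2^k - 1) gaps of length
  L/(c-1) - (L - s).  Integrating over x, the expected level difference is
    ((\<Sum>l=1..k. (2^l - 1) s) - (2^k - 1) max 0 (L - (c-1)(L - s))) / (N - s),
  and an elementary estimate bounds it by 2(c-2)/(c-1).  For s = 1 the query itself is a
  bottom-level node of both structures.
*)

lemma indicator_open_interval_has_integral:
  fixes a b lo hi :: real
  assumes "lo \<le> a" "b \<le> hi"
  shows "(indicator {a<..<b} has_integral max 0 (b - a)) {lo..hi}"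
proof -
  have "((\<lambda>x. 1::real) has_integral max 0 (b - a)) {a..b}"
    using has_integral_const_real[of "1::real" a b] by (cases "a \<le> b") auto
  then have "((\<lambda>x. 1::real) has_integral max 0 (b - a)) {a<..<b}"
    using has_integral_open_interval[of "\<lambda>x. 1::real" _ a b] by simp
  moreover have "{a<..<b} \<inter> {lo..hi} = {a<..<b}" using assms by auto
  moreover have "indicator {a<..<b} = (\<lambda>x. if x \<in> {a<..<b} then 1 else 0::real)"
    by (auto simp: indicator_def)
  ultimately show ?thesis
    using has_integral_restrict_Int[of "{a<..<b}" "\<lambda>x. 1::real" _ "{lo..hi}"] by simp
qed

lemma grid_uncovered_iff_in_gap:
  fixes u w x :: real
  assumes u: "0 < u" and w: "0 \<le> w" and x: "0 \<le> x" "x \<le> real M * u + w"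
  shows "\<not> (\<exists>m\<le>M. real m * u \<le> x \<and> x \<le> real m * u + w) \<longleftrightarrow>
         (\<exists>m<M. x \<in> {real m * u + w<..<real (Suc m) * u})"
proof
  assume uncovered: "\<not> (\<exists>m\<le>M. real m * u \<le> x \<and> x \<le> real m * u + w)"
  define q where "q = nat \<lfloor>x / u\<rfloor>"
  have q: "real q = of_int \<lfloor>x / u\<rfloor>" using x u by (simp add: q_def)
  have q_le: "real q * u \<le> x" and q_gt: "x < real (Suc q) * u"
    using floor_divide_lower[OF u, of x] floor_divide_upper[OF u, of x] q by (simp_all add: add.commute)
  have "q < M"
  proof (rule ccontr)
    assume "\<not> q < M"
    then have "real M * u \<le> real q * u" using u by (simp add: mult_right_mono)
    then show False using uncovered q_le x by auto
  qed
  then show "\<exists>m<M. x \<in> {real m * u + w<..<real (Suc m) * u}"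
    using uncovered q_le q_gt by (auto intro!: exI[of _ q])
next
  assume "\<exists>m<M. x \<in> {real m * u + w<..<real (Suc m) * u}"
  then obtain m' where gap: "real m' * u + w < x" "x < real (Suc m') * u" by auto
  show "\<not> (\<exists>m\<le>M. real m * u \<le> x \<and> x \<le> real m * u + w)"
  proof
    assume "\<exists>m\<le>M. real m * u \<le> x \<and> x \<le> real m * u + w"
    then obtain m where m: "real m * u \<le> x" "x \<le> real m * u + w" by blast
    show False
    proof (cases "m' < m")
      case True
      then have "real (Suc m') * u \<le> real m * u" using u by (intro mult_right_mono) auto
      then show False using gap m by linarith
    next
      case False
      then have "real m * u \<le> real m' * u" using u by (intro mult_right_mono) auto
      then show False using gap m by linarith
    qed
  qed
qed

lemma grid_uncovered_eq_sum_gaps: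
  fixes u w x :: real
  assumes u: "0 < u" and w: "0 \<le> w" and x: "0 \<le> x" "x \<le> real M * u + w"
  shows "of_bool (\<not> (\<exists>m\<le>M. real m * u \<le> x \<and> x \<le> real m * u + w)) =
         (\<Sum>m<M. indicator {real m * u + w<..<real (Suc m) * u} x :: real)"
proof -
  define gap where "gap m = {real m * u + w<..<real (Suc m) * u}" for m
  have "disjoint_family_on gap {..<M}"
    unfolding disjoint_family_on_def
  proof (intro ballI impI, rule ccontr)
    fix i j assume "i \<noteq> j" and "gap i \<inter> gap j \<noteq> {}"
    then obtain y where "y \<in> gap i" "y \<in> gap j" by blast
    then have "real i * u < real (Suc j) * u" "real j * u < real (Suc i) * u"
      using w by (auto simp: gap_def)
    then have "i < Suc j" "j < Suc i"
      using u by (simp_all only: mult_less_cancel_right_pos of_nat_less_iff)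
    then show False using \<open>i \<noteq> j\<close> by simp
  qed
  then have "indicator (\<Union>m<M. gap m) x = (\<Sum>m<M. indicator (gap m) x :: real)"
    by (rule indicator_UN_disjoint[OF finite_lessThan])
  moreover have "x \<in> (\<Union>m<M. gap m) \<longleftrightarrow> \<not> (\<exists>m\<le>M. real m * u \<le> x \<and> x \<le> real m * u + w)"
    using grid_uncovered_iff_in_gap[OF assms] by (auto simp: gap_def)
  ultimately show ?thesis by (simp add: gap_def indicator_def)
qed

lemma grid_uncovered_has_integral:
  fixes u w :: real
  assumes u: "0 < u" and w: "0 \<le> w"
  shows "((\<lambda>x. of_bool (\<not> (\<exists>m\<le>M. real m * u \<le> x \<and> x \<le> real m * u + w)))
           has_integral real M * max 0 (u - w)) {0..real M * u + w}"
proof -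
  have "((\<lambda>x. \<Sum>m<M. indicator {real m * u + w<..<real (Suc m) * u} x)
          has_integral (\<Sum>m<M. max 0 (u - w))) {0..real M * u + w}"
  proof (intro has_integral_sum finite_lessThan)
    fix m assume "m \<in> {..<M}"
    then have "real (Suc m) * u \<le> real M * u" using u by (intro mult_right_mono) auto
    then have "real (Suc m) * u \<le> real M * u + w" using w by linarith
    then have "(indicator {real m * u + w<..<real (Suc m) * u} has_integral
                 max 0 (real (Suc m) * u - (real m * u + w))) {0..real M * u + w}"
      using u w by (intro indicator_open_interval_has_integral) simp_all
    then show "(indicator {real m * u + w<..<real (Suc m) * u} has_integral max 0 (u - w))
                 {0..real M * u + w}"
      by (simp add: algebra_simps)
  qed
  then have "((\<lambda>x. \<Sum>m<M. indicator {real m * u + w<..<real (Suc m) * u} x)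
               has_integral real M * max 0 (u - w)) {0..real M * u + w}"
    by simp
  then show ?thesis
    by (rule has_integral_eq[rotated]) (use grid_uncovered_eq_sum_gaps[OF u w] in auto)
qed

lemma grid_covers_if_step_le:
  fixes u w x :: real
  assumes "0 < u" "u \<le> w" "0 \<le> x" "x \<le> real M * u + w"
  shows "\<exists>m\<le>M. real m * u \<le> x \<and> x \<le> real m * u + w"
  using grid_uncovered_iff_in_gap[of u w x M] assms by (auto simp: algebra_simps)

definition interval_grid :: "real \<Rightarrow> real \<Rightarrow> nat \<Rightarrow> real set set" where
  "interval_grid u L M = (\<lambda>m. {real m * u..<real m * u + L}) ` {..M}"

lemma interval_grid_contains_iff:
  fixes s x :: real
  assumes "0 < s"
  shows "(\<exists>I\<in>interval_grid u L M. {x..<x+s} \<subseteq> I) \<longleftrightarrow>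
         (\<exists>m\<le>M. real m * u \<le> x \<and> x \<le> real m * u + (L - s))"
  using assms by (auto simp: interval_grid_def)

lemma tree_nodes_eq_interval_grid:
  "tree_nodes n l = interval_grid (2^(n+1-l)) (2^(n+1-l)) (2^l - 1)"
proof -
  have "{..<(2::nat)^l} = {..2^l - 1}" by (simp add: lessThan_Suc_atMost[symmetric])
  then show ?thesis unfolding tree_nodes_def interval_grid_def by (simp add: algebra_simps)
qed

lemma dag_nodes_eq_interval_grid:
  "dag_nodes c n l =
     interval_grid (2^(n+1-l) / (real c - 1)) (2^(n+1-l)) ((c-1) * 2^l - (c-1))"
  unfolding dag_nodes_def interval_grid_def by (simp add: atLeast0AtMost)

lemma real_dag_grid_last_index:
  assumes "1 \<le> c"
  shows "real ((c-1) * 2^l - (c-1)) = (real c - 1) * (2^l - 1)"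
proof -
  have "(c-1) * 2^l - (c-1) = (c-1) * (2^l - 1)" by (simp add: diff_mult_distrib2)
  then show ?thesis using assms by (simp add: of_nat_diff)
qed

lemma tree_grid_span:
  assumes "l \<le> n + 1"
  shows "real (2^l - 1) * 2^(n+1-l) + 2^(n+1-l) = (2::real)^(n+1)"
  using assms by (simp add: of_nat_diff algebra_simps power_add[symmetric])

lemma dag_grid_span:
  assumes "2 \<le> c" "l \<le> n + 1"
  shows "real ((c-1) * 2^l - (c-1)) * (2^(n+1-l) / (real c - 1)) + 2^(n+1-l) = (2::real)^(n+1)"
proof -
  have count: "real ((c-1) * 2^l - (c-1)) = (real c - 1) * (2^l - 1)"
    using assms(1) by (intro real_dag_grid_last_index) simp
  have "(2::real)^l * 2^(n+1-l) = 2^(n+1)" using assms(2) by (simp flip: power_add)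
  then show ?thesis unfolding count using assms(1) by (simp add: field_simps)
qed

lemma tree_uncovered_has_integral:
  fixes s :: real
  assumes l: "l \<le> n + 1" and s: "0 < s" "s \<le> 2^(n+1-l)"
  shows "((\<lambda>x. of_bool (\<not> (\<exists>I\<in>tree_nodes n l. {x..<x+s} \<subseteq> I)))
           has_integral (2^l - 1) * s) {0..2^(n+1) - s}"
proof -
  define L :: real where "L = 2^(n+1-l)"
  have domain: "real (2^l - 1) * L + (L - s) = 2^(n+1) - s"
    using tree_grid_span[OF l] by (simp add: L_def)
  have amount: "real (2^l - 1) * max 0 (L - (L - s)) = (2^l - 1) * s"
    using s by (simp add: of_nat_diff)
  have "((\<lambda>x. of_bool (\<not> (\<exists>m\<le>2^l - 1. real m * L \<le> x \<and> x \<le> real m * L + (L - s))))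
          has_integral real (2^l - 1) * max 0 (L - (L - s))) {0..real (2^l - 1) * L + (L - s)}"
    using s by (intro grid_uncovered_has_integral) (simp_all add: L_def)
  then show ?thesis
    unfolding domain amount
    by (simp add: tree_nodes_eq_interval_grid interval_grid_contains_iff[OF s(1)] L_def)
qed

lemma dag_uncovered_has_integral:
  fixes s :: real
  assumes c: "2 \<le> c" and l: "l \<le> n + 1" and s: "0 < s" "s \<le> 2^(n+1-l)"
  shows "((\<lambda>x. of_bool (\<not> (\<exists>I\<in>dag_nodes c n l. {x..<x+s} \<subseteq> I)))
           has_integral (2^l - 1) * max 0 (2^(n+1-l) - (real c - 1) * (2^(n+1-l) - s)))
         {0..2^(n+1) - s}"
proof -
  define L :: real where "L = 2^(n+1-l)"
  define M where "M = (c-1) * 2^l - (c-1)"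
  have c1: "0 < real c - 1" using c by simp
  have domain: "real M * (L / (real c - 1)) + (L - s) = 2^(n+1) - s"
    using dag_grid_span[OF c l] by (simp add: L_def M_def)
  have "real M = (real c - 1) * (2^l - 1)"
    unfolding M_def using c by (intro real_dag_grid_last_index) simp
  then have "real M * max 0 (L / (real c - 1) - (L - s)) =
        (2^l - 1) * ((real c - 1) * max 0 (L / (real c - 1) - (L - s)))"
    by simp
  also have "(real c - 1) * max 0 (L / (real c - 1) - (L - s)) = max 0 (L - (real c - 1) * (L - s))"
  proof -
    have "(real c - 1) * (L / (real c - 1) - (L - s)) = L - (real c - 1) * (L - s)"
      using c1 by (simp add: right_diff_distrib)
    then show ?thesis unfolding max_mult_distrib_left using c1 by simp
  qed
  finally have amount: "real M * max 0 (L / (real c - 1) - (L - s)) =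
                       (2^l - 1) * max 0 (L - (real c - 1) * (L - s))" .
  have "((\<lambda>x. of_bool (\<not> (\<exists>m\<le>M. real m * (L / (real c - 1)) \<le> x \<and>
                                  x \<le> real m * (L / (real c - 1)) + (L - s))))
          has_integral real M * max 0 (L / (real c - 1) - (L - s)))
        {0..real M * (L / (real c - 1)) + (L - s)}"
    using s c1 by (intro grid_uncovered_has_integral) (simp_all add: L_def)
  then show ?thesis
    unfolding domain amount
    by (simp add: dag_nodes_eq_interval_grid interval_grid_contains_iff[OF s(1)] L_def M_def)
qed

lemma dag_nodes_cover_if_offset_le:
  fixes s x :: real
  assumes c: "2 \<le> c" and l: "l \<le> n + 1" and s: "0 < s"
    and offset: "2^(n+1-l) / (real c - 1) \<le> 2^(n+1-l) - s"
    and x: "0 \<le> x" "x + s \<le> 2^(n+1)"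
  shows "\<exists>I\<in>dag_nodes c n l. {x..<x+s} \<subseteq> I"
proof -
  define L :: real where "L = 2^(n+1-l)"
  define u where "u = L / (real c - 1)"
  define M where "M = (c-1) * 2^l - (c-1)"
  have "x \<le> real M * u + (L - s)"
    using dag_grid_span[OF c l] x by (simp add: L_def u_def M_def)
  moreover have "0 < u" using c by (simp add: u_def L_def)
  ultimately have "\<exists>m\<le>M. real m * u \<le> x \<and> x \<le> real m * u + (L - s)"
    using offset x(1) by (intro grid_covers_if_step_le) (simp_all add: L_def u_def)
  then show ?thesis
    by (simp only: dag_nodes_eq_interval_grid interval_grid_contains_iff[OF s] L_def u_def M_def)
qed

lemma real_Greatest_eq_diff_sum:
  fixes P :: "nat \<Rightarrow> bool"
  assumes "k \<le> b" "P 0"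
    and down: "\<And>l. l < k \<Longrightarrow> P (Suc l) \<Longrightarrow> P l"
    and above: "\<And>l. k < l \<Longrightarrow> \<not> P l"
  shows "real (GREATEST l. l \<le> b \<and> P l) = real k - (\<Sum>l=1..k. of_bool (\<not> P l))"
proof -
  define g where "g = (GREATEST l. l \<le> b \<and> P l)"
  have bounded: "\<And>l. l \<le> b \<and> P l \<Longrightarrow> l \<le> b" by simp
  have "g \<le> b \<and> P g"
    unfolding g_def by (rule GreatestI_nat[of _ 0, OF _ bounded]) (use assms in simp)
  then have "P g" "g \<le> k" using above by (auto simp: not_less[symmetric])
  have P_iff: "P l \<longleftrightarrow> l \<le> g" if "l \<le> k" for l
  proof
    assume "P l"
    then show "l \<le> g" unfolding g_def using that \<open>k \<le> b\<close> by (intro Greatest_le_nat[OF _ bounded]) simp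
  next
    assume "l \<le> g"
    then show "P l" using \<open>P g\<close> \<open>g \<le> k\<close>
      by (induction rule: inc_induct) (auto intro: down)
  qed
  have "(\<Sum>l=1..k. of_bool (\<not> P l)) = (\<Sum>l=1..k. of_bool (g < l) :: real)"
    using P_iff by (intro sum.cong) auto
  also have "\<dots> = real (card ({1..k} \<inter> {l. g < l}))" by (rule sum_of_bool_eq) simp_all
  also have "{1..k} \<inter> {l. g < l} = {g<..k}" by auto
  also have "real (card {g<..k}) = real k - real g" using \<open>g \<le> k\<close> by (simp add: of_nat_diff)
  finally show ?thesis by (simp add: g_def)
qed

lemma tree_nodes_refine:
  assumes "I \<in> tree_nodes n (Suc l)" "l \<le> n"
  shows "\<exists>J\<in>tree_nodes n l. I \<subseteq> J"
proof -
  obtain j where j: "j < 2^Suc l" and I: "I = {real j * 2^(n-l)..<(real j + 1) * 2^(n-l)}"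
    using assms(1) by (auto simp: tree_nodes_def)
  define i where "i = j div 2"
  have "i < 2^l" using j by (simp add: i_def)
  have "2 * i \<le> j" "j + 1 \<le> 2 * (i + 1)" unfolding i_def by presburger+
  then have "real (2 * i) \<le> real j" "real (j + 1) \<le> real (2 * (i + 1))"
    by (simp_all only: of_nat_le_iff)
  then have "real i * 2 \<le> real j" "real j + 1 \<le> (real i + 1) * 2" by simp_all
  then have "real i * 2 * 2^(n-l) \<le> real j * 2^(n-l)"
    and "(real j + 1) * 2^(n-l) \<le> (real i + 1) * 2 * 2^(n-l)"
    by (simp_all only: mult_right_mono zero_le_power zero_le_numeral)
  moreover have "(2::real)^(n+1-l) = 2 * 2^(n-l)" using assms(2) by (simp add: Suc_diff_le)
  ultimately have "I \<subseteq> {real i * 2^(n+1-l)..<(real i + 1) * 2^(n+1-l)}"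
    unfolding I by (auto simp: mult.assoc)
  then show ?thesis using \<open>i < 2^l\<close> unfolding tree_nodes_def by blast
qed

lemma sum_pow2_minus_one: "(\<Sum>l=1..k. (2::real)^l - 1) = 2 * (2^k - 1) - real k"
  by (induction k) (auto simp: algebra_simps)

lemma double_length_minus_gap_le:
  fixes d L s :: real
  assumes d: "2 \<le> d"
  shows "d * (2 * s - max 0 (L - d * (L - s))) \<le> 2 * (d - 1) * L"
proof (cases "L - d * (L - s) \<le> 0")
  case True
  then have "d * s \<le> (d - 1) * L" by (simp add: algebra_simps)
  then show ?thesis using True by (simp add: algebra_simps)
next
  case False
  have "d * (2 * s - (L - d * (L - s))) - 2 * (d - 1) * L = (d - 2) * ((d - 1) * L - d * s)"
    by (simp add: algebra_simps)
  moreover have "(d - 2) * ((d - 1) * L - d * s) \<le> 0"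
    using d False by (intro mult_nonneg_nonpos) (simp_all add: algebra_simps)
  ultimately show ?thesis using False by simp
qed

lemma level_diff_integral_bound:
  fixes d L s :: real
  assumes d: "2 \<le> d" and s: "0 < s" "s \<le> L" "s < 2^k * L"
  shows "(\<Sum>l=1..k. (2^l - 1) * s) - (2^k - 1) * max 0 (L - d * (L - s))
           < 2 * (d - 1) / d * (2^k * L - s)"
proof -
  define R :: real where "R = 2^k"
  define G where "G = max 0 (L - d * (L - s))"
  have "(\<Sum>l=1..k. (2^l - 1) * s) = (\<Sum>l=1..k. (2::real)^l - 1) * s"
    by (simp only: sum_distrib_right)
  also have "\<dots> = (2 * (R - 1) - real k) * s" by (simp only: sum_pow2_minus_one R_def)
  finally have sum_eq: "(\<Sum>l=1..k. (2^l - 1) * s) = (2 * (R - 1) - real k) * s" .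
  have lhs: "d * ((\<Sum>l=1..k. (2^l - 1) * s) - (R - 1) * G) =
             (R - 1) * (d * (2 * s - G)) - d * real k * s"
    unfolding sum_eq by (simp add: algebra_simps)
  have "1 \<le> R" by (simp add: R_def)
  then have "(R - 1) * (d * (2 * s - G)) \<le> (R - 1) * (2 * (d - 1) * L)"
    using double_length_minus_gap_le[OF d, of s L] by (intro mult_left_mono) (simp_all add: G_def)
  moreover have "- (d * real k * s) < 2 * (d - 1) * (L - s)"
  proof (cases "k = 0")
    case True
    then show ?thesis using s d by (simp add: mult_pos_pos)
  next
    case False
    then have "0 < d * real k * s" using s d by simp
    moreover have "0 \<le> 2 * (d - 1) * (L - s)" using s d by simp
    ultimately show ?thesis by linarith
  qed
  ultimately have "d * ((\<Sum>l=1..k. (2^l - 1) * s) - (R - 1) * G) < 2 * (d - 1) * (R * L - s)"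
    unfolding lhs by (simp add: algebra_simps)
  then show ?thesis using d by (simp add: R_def G_def pos_less_divide_eq mult.commute)
qed

locale query_scale =
  fixes n k :: nat and s :: real
  assumes k_le_n: "k \<le> n"
    and below_too_short: "2^(n-k) < s"
    and fits: "s \<le> 2^(n+1-k)"
begin

lemma s_pos: "0 < s"
  by (rule less_trans[OF _ below_too_short]) simp

lemma node_too_short: "k < l \<Longrightarrow> (2::real)^(n+1-l) < s"
  by (rule le_less_trans[OF _ below_too_short]) (simp add: power_increasing)

lemma node_fits: "l \<le> k \<Longrightarrow> s \<le> 2^(n+1-l)"
  by (rule order_trans[OF fits]) (simp add: power_increasing)

lemma node_fits_twice:
  assumes "l < k"
  shows "2 * s \<le> 2^(n+1-l)"
proof -
  have "(2::real)^(n+1-l) = 2 * 2^(n+1-Suc l)" using assms k_le_n by (simp add: Suc_diff_le)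
  then show ?thesis using node_fits[of "Suc l"] assms by simp
qed

lemma level_tree_eq:
  assumes x: "0 \<le> x" "x + s \<le> 2^(n+1)"
  shows "real (level_tree n {x..<x+s}) =
         real k - (\<Sum>l=1..k. of_bool (\<not> (\<exists>I\<in>tree_nodes n l. {x..<x+s} \<subseteq> I)))"
  unfolding level_tree_def
proof (rule real_Greatest_eq_diff_sum)
  show "k \<le> n + 1" using k_le_n by simp
  show "\<exists>I\<in>tree_nodes n 0. {x..<x+s} \<subseteq> I"
    using x s_pos by (auto simp: tree_nodes_eq_interval_grid interval_grid_contains_iff)
next
  fix l assume "l < k" "\<exists>I\<in>tree_nodes n (Suc l). {x..<x+s} \<subseteq> I"
  then show "\<exists>I\<in>tree_nodes n l. {x..<x+s} \<subseteq> I"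
    using k_le_n tree_nodes_refine by (meson order_trans subset_trans less_imp_le)
next
  fix l assume "k < l"
  then show "\<not> (\<exists>I\<in>tree_nodes n l. {x..<x+s} \<subseteq> I)"
    using node_too_short[OF \<open>k < l\<close>] s_pos
    by (auto simp: tree_nodes_eq_interval_grid interval_grid_contains_iff)
qed

lemma level_dag_eq:
  assumes c: "3 \<le> c" and x: "0 \<le> x" "x + s \<le> 2^(n+1)"
  shows "real (level_dag c n {x..<x+s}) =
         real k - of_bool (\<not> (\<exists>I\<in>dag_nodes c n k. {x..<x+s} \<subseteq> I))"
proof -
  let ?D = "\<lambda>l. \<exists>I\<in>dag_nodes c n l. {x..<x+s} \<subseteq> I"
  have D0: "?D 0"
    using x s_pos by (auto simp: dag_nodes_eq_interval_grid interval_grid_contains_iff)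
  have covered: "?D l" if "l < k" for l
  proof (rule dag_nodes_cover_if_offset_le)
    have "2^(n+1-l) / (real c - 1) \<le> (2::real)^(n+1-l) / 2"
      using c by (intro divide_left_mono) simp_all
    then show "2^(n+1-l) / (real c - 1) \<le> (2::real)^(n+1-l) - s"
      using node_fits_twice[OF that] by linarith
  qed (use c that k_le_n s_pos x in auto)
  have "real (level_dag c n {x..<x+s}) = real k - (\<Sum>l=1..k. of_bool (\<not> ?D l))"
    unfolding level_dag_def
  proof (rule real_Greatest_eq_diff_sum)
    show "k \<le> n + 1" using k_le_n by simp
  next
    fix l assume "k < l"
    then show "\<not> ?D l"
      using node_too_short[OF \<open>k < l\<close>] s_pos
      by (auto simp: dag_nodes_eq_interval_grid interval_grid_contains_iff)
  qed (use D0 covered in auto)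
  also have "(\<Sum>l=1..k. of_bool (\<not> ?D l)) = (\<Sum>l=1..k. if l = k then of_bool (\<not> ?D k) else 0)"
    using covered by (intro sum.cong) auto
  also have "\<dots> = of_bool (\<not> ?D k)" using D0 by (cases k) auto
  finally show ?thesis .
qed

lemma level_diff_eq:
  assumes "3 \<le> c" "0 \<le> x" "x + s \<le> 2^(n+1)"
  shows "level_diff c n s x =
         (\<Sum>l=1..k. of_bool (\<not> (\<exists>I\<in>tree_nodes n l. {x..<x+s} \<subseteq> I)))
         - of_bool (\<not> (\<exists>I\<in>dag_nodes c n k. {x..<x+s} \<subseteq> I))"
  using level_tree_eq[OF assms(2,3)] level_dag_eq[OF assms] by (simp add: level_diff_def)

lemma level_diff_has_integral:
  assumes c: "3 \<le> c"
  shows "(level_diff c n s has_integral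
           (\<Sum>l=1..k. (2^l - 1) * s) - (2^k - 1) * max 0 (2^(n+1-k) - (real c - 1) * (2^(n+1-k) - s)))
         {0..2^(n+1) - s}"
proof -
  have "((\<lambda>x. (\<Sum>l=1..k. of_bool (\<not> (\<exists>I\<in>tree_nodes n l. {x..<x+s} \<subseteq> I)))
              - of_bool (\<not> (\<exists>I\<in>dag_nodes c n k. {x..<x+s} \<subseteq> I)))
         has_integral
           (\<Sum>l=1..k. (2^l - 1) * s) - (2^k - 1) * max 0 (2^(n+1-k) - (real c - 1) * (2^(n+1-k) - s)))
         {0..2^(n+1) - s}"
    using c k_le_n s_pos fits node_fits
    by (intro has_integral_diff has_integral_sum finite_atLeastAtMost
          tree_uncovered_has_integral dag_uncovered_has_integral) auto
  then show ?thesis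
    by (rule has_integral_eq[rotated]) (use level_diff_eq[OF c] in auto)
qed

lemma level_diff_full_query_nonpos:
  assumes c: "3 \<le> c" and s: "s = 2^(n+1)"
  shows "level_diff c n s 0 \<le> 0"
proof -
  have "k = 0" using fits s power_le_imp_le_exp[of "2::real" "n+1" "n+1-k"] by simp
  then show ?thesis using level_diff_eq[OF c, of 0] s by simp
qed

lemma mean_level_diff_lt:
  assumes c: "3 \<le> c" and s: "s < 2^(n+1)"
  shows "integral {0..2^(n+1) - s} (level_diff c n s) / (2^(n+1) - s)
           < 2 * (real c - 2) / (real c - 1)"
proof -
  have "2^k * 2^(n+1-k) = (2::real)^(n+1)" using k_le_n by (simp flip: power_add)
  then show ?thesis
    using level_diff_has_integral[OF c] level_diff_integral_bound[of "real c - 1" s "2^(n+1-k)" k]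
      c s_pos fits s
    by (auto simp: integral_unique pos_divide_less_eq algebra_simps)
qed

end

lemma query_scale_exists:
  fixes s :: real
  assumes "1 < s" and "s \<le> 2^(n+1)"
  shows "\<exists>k. query_scale n k s"
  using assms(2)
proof (induction n)
  case 0
  then show ?case using assms by (intro exI[of _ 0]) (simp add: query_scale_def)
next
  case (Suc n)
  show ?case
  proof (cases "s \<le> 2^(n+1)")
    case True
    then obtain k where "query_scale n k s" using Suc.IH by blast
    then show ?thesis by (intro exI[of _ "Suc k"]) (simp add: query_scale_def)
  next
    case False
    then show ?thesis using Suc.prems by (intro exI[of _ 0]) (simp add: query_scale_def)
  qed
qed

lemma level_tree_unit_query:
  assumes "x < 2^(n+1)"
  shows "level_tree n {real x..<real x + 1} = n + 1"
  unfolding level_tree_def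
proof (rule Greatest_equality)
  have "{real x..<real x + 1} \<in> tree_nodes n (n+1)"
    unfolding tree_nodes_def using assms by (intro image_eqI[of _ _ x]) auto
  then show "n + 1 \<le> n + 1 \<and> (\<exists>I\<in>tree_nodes n (n+1). {real x..<real x + 1} \<subseteq> I)" by blast
qed simp

lemma level_dag_unit_query:
  assumes c: "2 \<le> c" and x: "x < 2^(n+1)"
  shows "level_dag c n {real x..<real x + 1} = n + 1"
  unfolding level_dag_def
proof (rule Greatest_equality)
  have "x * (c-1) \<le> (2^(n+1) - 1) * (c-1)" using x by (intro mult_right_mono) auto
  then have "x * (c-1) \<le> (c-1) * 2^(n+1) - (c-1)" by (metis diff_mult_distrib mult.commute mult_1)
  moreover have "real (x * (c-1)) * (1 / (real c - 1)) = real x" using c by (simp add: of_nat_diff)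
  ultimately have "\<exists>I\<in>dag_nodes c n (n+1). {real x..<real x + 1} \<subseteq> I"
    by (simp only: dag_nodes_eq_interval_grid interval_grid_contains_iff zero_less_one)
       (auto intro!: exI[of _ "x * (c-1)"])
  then show "n + 1 \<le> n + 1 \<and> (\<exists>I\<in>dag_nodes c n (n+1). {real x..<real x + 1} \<subseteq> I)" by blast
qed simp

theorem theorem2:
  fixes n \<alpha> :: nat
  assumes "\<alpha> \<ge> 1"
  defines "N \<equiv> (2::nat) ^ (n+1)"
      and "c \<equiv> (2::nat) ^ \<alpha> + 1"
  shows "(\<Sum>x<N. level_diff c n 1 (real x)) / real N = 0 \<and>
         (\<forall>s::real. 1 < s \<and> s \<le> real N \<longrightarrow>
           (s = real N \<longrightarrow> level_diff c n s 0 < 2 * (real c - 2) / (real c - 1)) \<and>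
           (s < real N \<longrightarrow>
              (level_diff c n s) integrable_on {0..real N - s} \<and>
              integral {0..real N - s} (level_diff c n s) / (real N - s)
                < 2 * (real c - 2) / (real c - 1)))"
proof -
  have c: "3 \<le> c"
    using power_increasing[OF assms(1), of "2::nat"] by (simp add: c_def)
  have N: "real N = 2^(n+1)" by (simp add: N_def)
  have bound_pos: "0 < 2 * (real c - 2) / (real c - 1)" using c by simp
  have "level_diff c n 1 (real x) = 0" if "x < N" for x
    using that c by (simp add: N_def level_diff_def level_tree_unit_query level_dag_unit_query)
  then have unit: "(\<Sum>x<N. level_diff c n 1 (real x)) = 0" by simp
  have "(s = real N \<longrightarrow> level_diff c n s 0 < 2 * (real c - 2) / (real c - 1)) \<and>
        (s < real N \<longrightarrow>
           (level_diff c n s) integrable_on {0..real N - s} \<and>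
           integral {0..real N - s} (level_diff c n s) / (real N - s)
             < 2 * (real c - 2) / (real c - 1))"
    if s: "1 < s" "s \<le> real N" for s
  proof -
    obtain k where "query_scale n k s" using query_scale_exists[OF s(1)] s(2) N by auto
    then interpret query_scale n k s .
    show ?thesis
      using level_diff_full_query_nonpos[OF c] mean_level_diff_lt[OF c] level_diff_has_integral[OF c]
        bound_pos N
      by (auto intro: has_integral_integrable)
  qed
  then show ?thesis using unit by (intro conjI) (simp, blast)
qed

end
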